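(* Let $\mathcal D$ be a preduoidal category and $T$ a separately opmonoidal monad on $\mathcal D$, and suppose $\mathcal D^T$, with its lifted monoidal structures $(\circ,(\bot,T^\circ_0))$ and $(\bullet,(1,T^\bullet_0))$, carries a duoidal structure with interchange law $\xi_{a,b,c,d}\colon (a\bullet b)\circ(c\bullet d)\to(a\circ c)\bullet(b\circ d)$ and structure morphisms $\nu,\varpi,\iota$. Then $\nu,\varpi,\iota$ together with $$R_{a,b,c,d} := \xi_{Ta,Tb,Tc,Td}\cdot\big((\eta_a\bullet\eta_b)\circ(\eta_c\bullet\eta_d)\big)\colon (a\bullet b)\circ(c\bullet d)\to(Ta\circ Tc)\bullet(Tb\circ Td),\quad a,b,c,d\in\mathcal D$$ (with $Ta$ the free $T$-algebra $(Ta,\mu_a)$) form an R-matrix on $T$.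
   Context: Composition of morphisms is written $g\cdot f$ ($f$ first). A preduoidal category is a category $\mathcal D$ with two monoidal structures $(\circ,\bot)$ and $(\bullet,1)$ (associators $\alpha$, unitors $\lambda^\circ,\rho^\circ,\lambda^\bullet,\rho^\bullet$). A bimonad on a monoidal category $(\mathcal C,\otimes,I)$ is a monad $(B,\mu,\eta)$ with an opmonoidal structure $B_2\colon B(x\otimes y)\to Bx\otimes By$, $B_0\colon BI\to I$ such that $\mu,\eta$ are opmonoidal. A separately opmonoidal monad on $\mathcal D$ is a monad $(T,\mu,\eta)$ with a bimonad structure $(T^\circ_2,T^\circ_0)$ on $(\mathcal D,\circ,\bot)$ and one $(T^\bullet_2,T^\bullet_0)$ on $(\mathcal D,\bullet,1)$. Lifted monoidal structures on $\mathcal D^T$: $(a,\alpha)\circ(b,\beta)=(a\circ b,(\alpha\circ\beta)\cdot T^\circ_{2,a,b})$, unit $(\bot,T^\circ_0)$; $(a,\alpha)\bullet(b,\beta)=(a\bullet b,(\alpha\bullet\beta)\cdot T^\bullet_{2,a,b})$, unit $(1,T^\bullet_0)$. Duoidal category: a preduoidal category with a natural transformation $\zeta_{x,y,a,b}\colon (x\bullet y)\circ(a\bullet b)\to(x\circ a)\bullet(y\circ b)$ and morphisms $\nu\colon\bot\to\bot\bullet\bot$, $\varpi\colon 1\circ 1\to 1$, $\iota\colon\bot\to 1$ such that $(1,\varpi,\iota)$ is a monoid in $(\mathcal D,\circ,\bot)$, $(\bot,\nu,\iota)$ is a comonoid in $(\mathcal D,\bullet,1)$, and: (A1) $(\alpha\bullet\alpha)\cdot\zeta_{x\circ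 a,y\circ b,c,d}\cdot(\zeta_{x,y,a,b}\circ\mathrm{id}) = \zeta_{x,y,a\circ c,b\circ d}\cdot(\mathrm{id}\circ\zeta_{a,b,c,d})\cdot\alpha$; (A2) $\alpha\cdot(\zeta_{x,a,y,b}\bullet\mathrm{id})\cdot\zeta_{x\bullet a,c,y\bullet b,d} = (\mathrm{id}\bullet\zeta_{a,c,b,d})\cdot\zeta_{x,a\bullet c,y,b\bullet d}\cdot(\alpha\circ\alpha)$; (U) $\zeta_{\bot,\bot,a,b}\cdot(\nu\circ\mathrm{id})=((\lambda^\circ_a)^{-1}\bullet(\lambda^\circ_b)^{-1})\cdot\lambda^\circ_{a\bullet b}$, $\zeta_{a,b,\bot,\bot}\cdot(\mathrm{id}\circ\nu)=((\rho^\circ_a)^{-1}\bullet(\rho^\circ_b)^{-1})\cdot\rho^\circ_{a\bullet b}$, $(\varpi\bullet\mathrm{id})\cdot\zeta_{1,a,1,b}=(\lambda^\bullet_{a\circ b})^{-1}\cdot(\lambda^\bullet_a\circ\lambda^\bullet_b)$, $(\mathrm{id}\bullet\varpi)\cdot\zeta_{a,1,b,1}=(\rho^\bullet_{a\circ b})^{-1}\cdot(\rho^\bullet_a\circ\rho^\bullet_b)$. A duoidal structure on $\mathcal D^T$ means such data for the lifted structures with $\xi$ a natural family of $T$-algebra morphisms and $\nu,\varpi,\iota$ morphisms of $T$-algebras. R-matrix on $T$: a natural transformation $R_{a,b,c,d}\colon (a\bullet b)\circ(c\bullet d)\to(Ta\circ Tc)\bullet(Tb\circ Td)$ together with morphisms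 of $T$-algebras $\nu\colon(\bot,T^\circ_0)\to(\bot,T^\circ_0)\bullet(\bot,T^\circ_0)$, $\varpi\colon(1,T^\bullet_0)\circ(1,T^\bullet_0)\to(1,T^\bullet_0)$, $\iota\colon(\bot,T^\circ_0)\to(1,T^\bullet_0)$, such that $(1,\varpi,\iota)$ is a monoid in $(\mathcal D^T,\circ,\bot)$, $(\bot,\nu,\iota)$ is a comonoid in $(\mathcal D^T,\bullet,1)$, and (associators suppressed): (R-unit) for all $T$-algebras $(a,\alpha),(b,\beta)$: $((T^\circ_0\circ\alpha)\bullet(T^\circ_0\circ\beta))\cdot R_{\bot,\bot,a,b}\cdot(\nu\circ\mathrm{id})=((\lambda^\circ_a)^{-1}\bullet(\lambda^\circ_b)^{-1})\cdot\lambda^\circ_{a\bullet b}$; $((\alpha\circ T^\circ_0)\bullet(\beta\circ T^\circ_0))\cdot R_{a,b,\bot,\bot}\cdot(\mathrm{id}\circ\nu)=((\rho^\circ_a)^{-1}\bullet(\rho^\circ_b)^{-1})\cdot\rho^\circ_{a\bullet b}$; $(\varpi\bullet\mathrm{id})\cdot((T^\bullet_0\circ T^\bullet_0)\bullet(\alpha\circ\beta))\cdot R_{1,a,1,b}=(\lambda^\bullet_{a\circ b})^{-1}\cdot(\lambda^\bullet_a\circ\lambda^\bullet_b)$; $(\mathrm{id}\bullet\varpi)\cdot((\alpha\circ\beta)\bullet(T^\bullet_0\circ T^\bullet_0))\cdot R_{a,1,b,1}=(\rho^\bullet_{a\circ b})^{-1}\cdot(\rho^\bullet_a\circ\rho^\bullet_b)$.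 (R-lift) for all objects: $((\mu_a\circ\mu_c)\bullet(\mu_b\circ\mu_d))\cdot R_{Ta,Tb,Tc,Td}\cdot(T^\bullet_{2,a,b}\circ T^\bullet_{2,c,d})\cdot T^\circ_{2,a\bullet b,c\bullet d} = ((\mu_a\circ\mu_c)\bullet(\mu_b\circ\mu_d))\cdot(T^\circ_{2,Ta,Tc}\bullet T^\circ_{2,Tb,Td})\cdot T^\bullet_{2,Ta\circ Tc,Tb\circ Td}\cdot TR_{a,b,c,d}$. (R-1) for all objects: $((\mu_a\circ\mu_c\circ Tx)\bullet(\mu_b\circ\mu_d\circ Ty))\cdot((T^\circ_{2,Ta,Tc}\circ Tx)\bullet(T^\circ_{2,Tb,Td}\circ Ty))\cdot R_{Ta\circ Tc,Tb\circ Td,x,y}\cdot(R_{a,b,c,d}\circ\mathrm{id}) = ((Ta\circ\mu_c\circ\mu_x)\bullet(Tb\circ\mu_d\circ\mu_y))\cdot((Ta\circ T^\circ_{2,Tc,Tx})\bullet(Tb\circ T^\circ_{2,Td,Ty}))\cdot R_{a,b,Tc\circ Tx,Td\circ Ty}\cdot(\mathrm{id}\circ R_{c,d,x,y})$. (R-2) for all objects: $(((\mu_x\circ\mu_y)\bullet(\mu_a\circ\mu_b))\bullet\mathrm{id})\cdot(R_{Tx,Ta,Ty,Tb}\bullet\mathrm{id})\cdot((T^\bullet_{2,x,a}\circ T^\bullet_{2,y,b})\bullet\mathrm{id})\cdot R_{x\bullet a,c,y\bullet b,d} = (\mathrm{id}\bullet((\mu_a\circ\mu_b)\bullet(\mu_c\circ\mu_d)))\cdot(\mathrm{id}\bullet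 R_{Ta,Tc,Tb,Td})\cdot(\mathrm{id}\bullet(T^\bullet_{2,a,c}\circ T^\bullet_{2,b,d}))\cdot R_{x,a\bullet c,y,b\bullet d}\cdot(\alpha\circ\alpha)$. *)

theory Defs
  imports Main
begin

section \<open>Categories (hom-set presentation)\<close>

text \<open>A category is given by a set of objects, hom-sets, composition
  cmp g f (meaning g after f, the paper's g.f) and identities.\<close>

record ('o,'m) category =
  Obj :: "'o set"
  Hom :: "'o \<Rightarrow> 'o \<Rightarrow> 'm set"
  cmp :: "'m \<Rightarrow> 'm \<Rightarrow> 'm"
  idm :: "'o \<Rightarrow> 'm"

definition category :: "('o,'m) category \<Rightarrow> bool" where
  "category C \<longleftrightarrow>
     (\<forall>a b f. f \<in> Hom C a b \<longrightarrow> a \<in> Obj C \<and> b \<in> Obj C) \<and>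
     (\<forall>a\<in>Obj C. idm C a \<in> Hom C a a) \<and>
     (\<forall>a b c f g. f \<in> Hom C a b \<longrightarrow> g \<in> Hom C b c \<longrightarrow> cmp C g f \<in> Hom C a c) \<and>
     (\<forall>a b f. f \<in> Hom C a b \<longrightarrow> cmp C (idm C b) f = f \<and> cmp C f (idm C a) = f) \<and>
     (\<forall>a b c d f g h. f \<in> Hom C a b \<longrightarrow> g \<in> Hom C b c \<longrightarrow> h \<in> Hom C c d \<longrightarrow>
        cmp C h (cmp C g f) = cmp C (cmp C h g) f)"

fun cmps :: "('o,'m) category \<Rightarrow> 'm list \<Rightarrow> 'm" where
  "cmps C [] = undefined"
| "cmps C [f] = f"
| "cmps C (f # g # fs) = cmp C f (cmps C (g # fs))"

definition iso :: "('o,'m) category \<Rightarrow> 'o \<Rightarrow> 'o \<Rightarrow> 'm \<Rightarrow> bool" where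
  "iso C a b f \<longleftrightarrow> f \<in> Hom C a b \<and>
     (\<exists>g \<in> Hom C b a. cmp C g f = idm C a \<and> cmp C f g = idm C b)"

definition invm :: "('o,'m) category \<Rightarrow> 'o \<Rightarrow> 'o \<Rightarrow> 'm \<Rightarrow> 'm" where
  "invm C a b f = (THE g. g \<in> Hom C b a \<and> cmp C g f = idm C a \<and> cmp C f g = idm C b)"

record ('o,'m) monoidal =
  tob :: "'o \<Rightarrow> 'o \<Rightarrow> 'o"
  tm  :: "'m \<Rightarrow> 'm \<Rightarrow> 'm"
  unt :: "'o"
  asc :: "'o \<Rightarrow> 'o \<Rightarrow> 'o \<Rightarrow> 'm"
  lu  :: "'o \<Rightarrow> 'm"
  ru  :: "'o \<Rightarrow> 'm"

definition monoidal_cat :: "('o,'m) category \<Rightarrow> ('o,'m) monoidal \<Rightarrow> bool" where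
  "monoidal_cat C M \<longleftrightarrow> category C \<and>
    unt M \<in> Obj C \<and>
    (\<forall>a\<in>Obj C. \<forall>b\<in>Obj C. tob M a b \<in> Obj C) \<and>
    (\<forall>a b c d f g. f \<in> Hom C a b \<longrightarrow> g \<in> Hom C c d \<longrightarrow>
        tm M f g \<in> Hom C (tob M a c) (tob M b d)) \<and>
    (\<forall>a\<in>Obj C. \<forall>b\<in>Obj C. tm M (idm C a) (idm C b) = idm C (tob M a b)) \<and>
    (\<forall>a b c a' b' c' f f' g g'. f \<in> Hom C a b \<longrightarrow> f' \<in> Hom C b c \<longrightarrow>
        g \<in> Hom C a' b' \<longrightarrow> g' \<in> Hom C b' c' \<longrightarrow>
        tm M (cmp C f' f) (cmp C g' g) = cmp C (tm M f' g') (tm M f g)) \<and>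
    (\<forall>a\<in>Obj C. \<forall>b\<in>Obj C. \<forall>c\<in>Obj C.
        iso C (tob M (tob M a b) c) (tob M a (tob M b c)) (asc M a b c)) \<and>
    (\<forall>a b c a' b' c' f g h. f \<in> Hom C a a' \<longrightarrow> g \<in> Hom C b b' \<longrightarrow> h \<in> Hom C c c' \<longrightarrow>
        cmp C (asc M a' b' c') (tm M (tm M f g) h) = cmp C (tm M f (tm M g h)) (asc M a b c)) \<and>
    (\<forall>a\<in>Obj C. iso C (tob M (unt M) a) a (lu M a)) \<and>
    (\<forall>a b f. f \<in> Hom C a b \<longrightarrow>
        cmp C (lu M b) (tm M (idm C (unt M)) f) = cmp C f (lu M a)) \<and>
    (\<forall>a\<in>Obj C. iso C (tob M a (unt M)) a (ru M a)) \<and>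
    (\<forall>a b f. f \<in> Hom C a b \<longrightarrow>
        cmp C (ru M b) (tm M f (idm C (unt M))) = cmp C f (ru M a)) \<and>
    (\<forall>a\<in>Obj C. \<forall>b\<in>Obj C. \<forall>c\<in>Obj C. \<forall>d\<in>Obj C.
        cmps C [asc M a b (tob M c d), asc M (tob M a b) c d] =
        cmps C [tm M (idm C a) (asc M b c d), asc M a (tob M b c) d, tm M (asc M a b c) (idm C d)]) \<and>
    (\<forall>a\<in>Obj C. \<forall>b\<in>Obj C.
        cmp C (tm M (idm C a) (lu M b)) (asc M a (unt M) b) = tm M (ru M a) (idm C b))"

definition preduoidal :: "('o,'m) category \<Rightarrow> ('o,'m) monoidal \<Rightarrow> ('o,'m) monoidal \<Rightarrow> bool" where
  "preduoidal C Mc Mb \<longleftrightarrow> monoidal_cat C Mc \<and> monoidal_cat C Mb"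

record ('o,'m) monad =
  Tob :: "'o \<Rightarrow> 'o"
  Tm  :: "'m \<Rightarrow> 'm"
  mu  :: "'o \<Rightarrow> 'm"
  eta :: "'o \<Rightarrow> 'm"

definition monad :: "('o,'m) category \<Rightarrow> ('o,'m) monad \<Rightarrow> bool" where
  "monad C T \<longleftrightarrow> category C \<and>
    (\<forall>a\<in>Obj C. Tob T a \<in> Obj C) \<and>
    (\<forall>a b f. f \<in> Hom C a b \<longrightarrow> Tm T f \<in> Hom C (Tob T a) (Tob T b)) \<and>
    (\<forall>a\<in>Obj C. Tm T (idm C a) = idm C (Tob T a)) \<and>
    (\<forall>a b c f g. f \<in> Hom C a b \<longrightarrow> g \<in> Hom C b c \<longrightarrow>
        Tm T (cmp C g f) = cmp C (Tm T g) (Tm T f)) \<and>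
    (\<forall>a\<in>Obj C. mu T a \<in> Hom C (Tob T (Tob T a)) (Tob T a)) \<and>
    (\<forall>a\<in>Obj C. eta T a \<in> Hom C a (Tob T a)) \<and>
    (\<forall>a b f. f \<in> Hom C a b \<longrightarrow> cmp C (mu T b) (Tm T (Tm T f)) = cmp C (Tm T f) (mu T a)) \<and>
    (\<forall>a b f. f \<in> Hom C a b \<longrightarrow> cmp C (eta T b) f = cmp C (Tm T f) (eta T a)) \<and>
    (\<forall>a\<in>Obj C. cmp C (mu T a) (Tm T (mu T a)) = cmp C (mu T a) (mu T (Tob T a))) \<and>
    (\<forall>a\<in>Obj C. cmp C (mu T a) (eta T (Tob T a)) = idm C (Tob T a)) \<and>
    (\<forall>a\<in>Obj C. cmp C (mu T a) (Tm T (eta T a)) = idm C (Tob T a))"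

definition bimonad :: "('o,'m) category \<Rightarrow> ('o,'m) monoidal \<Rightarrow> ('o,'m) monad \<Rightarrow>
    ('o \<Rightarrow> 'o \<Rightarrow> 'm) \<Rightarrow> 'm \<Rightarrow> bool" where
  "bimonad C M T T2 T0 \<longleftrightarrow> monoidal_cat C M \<and> monad C T \<and>
    (\<forall>x\<in>Obj C. \<forall>y\<in>Obj C.
       T2 x y \<in> Hom C (Tob T (tob M x y)) (tob M (Tob T x) (Tob T y))) \<and>
    T0 \<in> Hom C (Tob T (unt M)) (unt M) \<and>
    (\<forall>x x' y y' f g. f \<in> Hom C x x' \<longrightarrow> g \<in> Hom C y y' \<longrightarrow>
       cmp C (T2 x' y') (Tm T (tm M f g)) = cmp C (tm M (Tm T f) (Tm T g)) (T2 x y)) \<and>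
    (\<forall>x\<in>Obj C. \<forall>y\<in>Obj C. \<forall>z\<in>Obj C.
       cmps C [asc M (Tob T x) (Tob T y) (Tob T z), tm M (T2 x y) (idm C (Tob T z)),
               T2 (tob M x y) z] =
       cmps C [tm M (idm C (Tob T x)) (T2 y z), T2 x (tob M y z), Tm T (asc M x y z)]) \<and>
    (\<forall>x\<in>Obj C. cmps C [lu M (Tob T x), tm M T0 (idm C (Tob T x)), T2 (unt M) x]
                 = Tm T (lu M x)) \<and>
    (\<forall>x\<in>Obj C. cmps C [ru M (Tob T x), tm M (idm C (Tob T x)) T0, T2 x (unt M)]
                 = Tm T (ru M x)) \<and>
    (\<forall>x\<in>Obj C. \<forall>y\<in>Obj C.
       cmp C (T2 x y) (mu T (tob M x y)) =
       cmps C [tm M (mu T x) (mu T y), T2 (Tob T x) (Tob T y), Tm T (T2 x y)]) \<and>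
    cmp C T0 (mu T (unt M)) = cmp C T0 (Tm T T0) \<and>
    (\<forall>x\<in>Obj C. \<forall>y\<in>Obj C.
       cmp C (T2 x y) (eta T (tob M x y)) = tm M (eta T x) (eta T y)) \<and>
    cmp C T0 (eta T (unt M)) = idm C (unt M)"

definition sep_opmonoidal_monad :: "('o,'m) category \<Rightarrow> ('o,'m) monoidal \<Rightarrow> ('o,'m) monoidal \<Rightarrow>
    ('o,'m) monad \<Rightarrow> ('o \<Rightarrow> 'o \<Rightarrow> 'm) \<Rightarrow> 'm \<Rightarrow> ('o \<Rightarrow> 'o \<Rightarrow> 'm) \<Rightarrow> 'm \<Rightarrow> bool" where
  "sep_opmonoidal_monad C Mc Mb T T2c T0c T2b T0b \<longleftrightarrow>
     preduoidal C Mc Mb \<and> bimonad C Mc T T2c T0c \<and> bimonad C Mb T T2b T0b"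

definition alg :: "('o,'m) category \<Rightarrow> ('o,'m) monad \<Rightarrow> 'o \<times> 'm \<Rightarrow> bool" where
  "alg C T A \<longleftrightarrow> fst A \<in> Obj C \<and> snd A \<in> Hom C (Tob T (fst A)) (fst A) \<and>
     cmp C (snd A) (eta T (fst A)) = idm C (fst A) \<and>
     cmp C (snd A) (Tm T (snd A)) = cmp C (snd A) (mu T (fst A))"

definition alg_hom :: "('o,'m) category \<Rightarrow> ('o,'m) monad \<Rightarrow> 'o \<times> 'm \<Rightarrow> 'o \<times> 'm \<Rightarrow> 'm \<Rightarrow> bool" where
  "alg_hom C T A B f \<longleftrightarrow> alg C T A \<and> alg C T B \<and> f \<in> Hom C (fst A) (fst B) \<and>
     cmp C f (snd A) = cmp C (snd B) (Tm T f)"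

definition free_alg :: "('o,'m) monad \<Rightarrow> 'o \<Rightarrow> 'o \<times> 'm" where
  "free_alg T a = (Tob T a, mu T a)"

definition lift :: "('o,'m) category \<Rightarrow> ('o,'m) monoidal \<Rightarrow> ('o \<Rightarrow> 'o \<Rightarrow> 'm) \<Rightarrow>
    'o \<times> 'm \<Rightarrow> 'o \<times> 'm \<Rightarrow> 'o \<times> 'm" where
  "lift C M T2 A B = (tob M (fst A) (fst B), cmp C (tm M (snd A) (snd B)) (T2 (fst A) (fst B)))"

definition unit_data_ok :: "('o,'m) category \<Rightarrow> ('o,'m) monoidal \<Rightarrow> ('o,'m) monoidal \<Rightarrow>
    ('o,'m) monad \<Rightarrow> ('o \<Rightarrow> 'o \<Rightarrow> 'm) \<Rightarrow> 'm \<Rightarrow> ('o \<Rightarrow> 'o \<Rightarrow> 'm) \<Rightarrow> 'm \<Rightarrow>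
    'm \<Rightarrow> 'm \<Rightarrow> 'm \<Rightarrow> bool" where
  "unit_data_ok C Mc Mb T T2c T0c T2b T0b \<nu> \<omega> \<iota> \<longleftrightarrow>
    (let Bot = (unt Mc, T0c); One = (unt Mb, T0b); bt = unt Mc; on = unt Mb in
     \<comment> \<open>nu, varpi, iota are morphisms of T-algebras\<close>
     alg_hom C T Bot (lift C Mb T2b Bot Bot) \<nu> \<and>
     alg_hom C T (lift C Mc T2c One One) One \<omega> \<and>
     alg_hom C T Bot One \<iota> \<and>
     \<comment> \<open>(1, varpi, iota) is a monoid in (D^T, circ, Bot)\<close>
     cmp C \<omega> (tm Mc \<omega> (idm C on)) = cmps C [\<omega>, tm Mc (idm C on) \<omega>, asc Mc on on on] \<and>
     cmp C \<omega> (tm Mc \<iota> (idm C on)) = lu Mc on \<and>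
     cmp C \<omega> (tm Mc (idm C on) \<iota>) = ru Mc on \<and>
     \<comment> \<open>(Bot, nu, iota) is a comonoid in (D^T, bullet, 1)\<close>
     cmps C [asc Mb bt bt bt, tm Mb \<nu> (idm C bt), \<nu>] = cmp C (tm Mb (idm C bt) \<nu>) \<nu> \<and>
     cmps C [lu Mb bt, tm Mb \<iota> (idm C bt), \<nu>] = idm C bt \<and>
     cmps C [ru Mb bt, tm Mb (idm C bt) \<iota>, \<nu>] = idm C bt)"

definition duoidal_on_algebras :: "('o,'m) category \<Rightarrow> ('o,'m) monoidal \<Rightarrow> ('o,'m) monoidal \<Rightarrow>
    ('o,'m) monad \<Rightarrow> ('o \<Rightarrow> 'o \<Rightarrow> 'm) \<Rightarrow> 'm \<Rightarrow> ('o \<Rightarrow> 'o \<Rightarrow> 'm) \<Rightarrow> 'm \<Rightarrow>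
    ('o \<times> 'm \<Rightarrow> 'o \<times> 'm \<Rightarrow> 'o \<times> 'm \<Rightarrow> 'o \<times> 'm \<Rightarrow> 'm) \<Rightarrow> 'm \<Rightarrow> 'm \<Rightarrow> 'm \<Rightarrow> bool" where
  "duoidal_on_algebras C Mc Mb T T2c T0c T2b T0b \<xi> \<nu> \<omega> \<iota> \<longleftrightarrow>
    (let lc = lift C Mc T2c; lb = lift C Mb T2b; Bot = (unt Mc, T0c); One = (unt Mb, T0b);
         oc = tob Mc; ob = tob Mb; mc = tm Mc; mb = tm Mb; I = idm C; ALG = alg C T in
     \<comment> \<open>xi is a family of T-algebra morphisms\<close>
     (\<forall>A B X Y. ALG A \<longrightarrow> ALG B \<longrightarrow> ALG X \<longrightarrow> ALG Y \<longrightarrow>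
        alg_hom C T (lc (lb A B) (lb X Y)) (lb (lc A X) (lc B Y)) (\<xi> A B X Y)) \<and>
     \<comment> \<open>naturality of xi with respect to T-algebra morphisms\<close>
     (\<forall>A A' B B' X X' Y Y' f g h k.
        alg_hom C T A A' f \<longrightarrow> alg_hom C T B B' g \<longrightarrow> alg_hom C T X X' h \<longrightarrow> alg_hom C T Y Y' k \<longrightarrow>
        cmp C (\<xi> A' B' X' Y') (mc (mb f g) (mb h k)) = cmp C (mb (mc f h) (mc g k)) (\<xi> A B X Y)) \<and>
     unit_data_ok C Mc Mb T T2c T0c T2b T0b \<nu> \<omega> \<iota> \<and>
     \<comment> \<open>(A1)\<close>
     (\<forall>X Y A B P Q. ALG X \<longrightarrow> ALG Y \<longrightarrow> ALG A \<longrightarrow> ALG B \<longrightarrow> ALG P \<longrightarrow> ALG Q \<longrightarrow>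
        (let x = fst X; y = fst Y; a = fst A; b = fst B; c = fst P; d = fst Q in
        cmps C [mb (asc Mc x a c) (asc Mc y b d), \<xi> (lc X A) (lc Y B) P Q,
                mc (\<xi> X Y A B) (I (ob c d))] =
        cmps C [\<xi> X Y (lc A P) (lc B Q), mc (I (ob x y)) (\<xi> A B P Q),
                asc Mc (ob x y) (ob a b) (ob c d)])) \<and>
     \<comment> \<open>(A2)\<close>
     (\<forall>X Y A B P Q. ALG X \<longrightarrow> ALG Y \<longrightarrow> ALG A \<longrightarrow> ALG B \<longrightarrow> ALG P \<longrightarrow> ALG Q \<longrightarrow>
        (let x = fst X; y = fst Y; a = fst A; b = fst B; c = fst P; d = fst Q in
        cmps C [asc Mb (oc x y) (oc a b) (oc c d), mb (\<xi> X A Y B) (I (oc c d)),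
                \<xi> (lb X A) P (lb Y B) Q] =
        cmps C [mb (I (oc x y)) (\<xi> A P B Q), \<xi> X (lb A P) Y (lb B Q),
                mc (asc Mb x a c) (asc Mb y b d)])) \<and>
     \<comment> \<open>(U)\<close>
     (\<forall>A B. ALG A \<longrightarrow> ALG B \<longrightarrow>
        (let a = fst A; b = fst B in
        cmp C (\<xi> Bot Bot A B) (mc \<nu> (I (ob a b))) =
          cmp C (mb (invm C (oc (unt Mc) a) a (lu Mc a)) (invm C (oc (unt Mc) b) b (lu Mc b)))
                (lu Mc (ob a b)) \<and>
        cmp C (\<xi> A B Bot Bot) (mc (I (ob a b)) \<nu>) =
          cmp C (mb (invm C (oc a (unt Mc)) a (ru Mc a)) (invm C (oc b (unt Mc)) b (ru Mc b)))
                (ru Mc (ob a b)) \<and>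
        cmp C (mb \<omega> (I (oc a b))) (\<xi> One A One B) =
          cmp C (invm C (ob (unt Mb) (oc a b)) (oc a b) (lu Mb (oc a b)))
                (mc (lu Mb a) (lu Mb b)) \<and>
        cmp C (mb (I (oc a b)) \<omega>) (\<xi> A One B One) =
          cmp C (invm C (ob (oc a b) (unt Mb)) (oc a b) (ru Mb (oc a b)))
                (mc (ru Mb a) (ru Mb b)))))"

definition r_matrix :: "('o,'m) category \<Rightarrow> ('o,'m) monoidal \<Rightarrow> ('o,'m) monoidal \<Rightarrow>
    ('o,'m) monad \<Rightarrow> ('o \<Rightarrow> 'o \<Rightarrow> 'm) \<Rightarrow> 'm \<Rightarrow> ('o \<Rightarrow> 'o \<Rightarrow> 'm) \<Rightarrow> 'm \<Rightarrow>
    ('o \<Rightarrow> 'o \<Rightarrow> 'o \<Rightarrow> 'o \<Rightarrow> 'm) \<Rightarrow> 'm \<Rightarrow> 'm \<Rightarrow> 'm \<Rightarrow> bool" where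
  "r_matrix C Mc Mb T T2c T0c T2b T0b R \<nu> \<omega> \<iota> \<longleftrightarrow>
    (let oc = tob Mc; ob = tob Mb; mc = tm Mc; mb = tm Mb; I = idm C; ALG = alg C T;
         T' = Tob T; Tf = Tm T; \<mu> = mu T; bt = unt Mc; on = unt Mb in
     \<comment> \<open>R is a natural transformation\<close>
     (\<forall>a\<in>Obj C. \<forall>b\<in>Obj C. \<forall>c\<in>Obj C. \<forall>d\<in>Obj C.
        R a b c d \<in> Hom C (oc (ob a b) (ob c d)) (ob (oc (T' a) (T' c)) (oc (T' b) (T' d)))) \<and>
     (\<forall>a a' b b' c c' d d' f g h k.
        f \<in> Hom C a a' \<longrightarrow> g \<in> Hom C b b' \<longrightarrow> h \<in> Hom C c c' \<longrightarrow> k \<in> Hom C d d' \<longrightarrow>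
        cmp C (R a' b' c' d') (mc (mb f g) (mb h k)) =
        cmp C (mb (mc (Tf f) (Tf h)) (mc (Tf g) (Tf k))) (R a b c d)) \<and>
     \<comment> \<open>nu, varpi, iota: T-algebra morphisms, monoid and comonoid\<close>
     unit_data_ok C Mc Mb T T2c T0c T2b T0b \<nu> \<omega> \<iota> \<and>
     \<comment> \<open>(R-unit)\<close>
     (\<forall>A B. ALG A \<longrightarrow> ALG B \<longrightarrow>
        (let a = fst A; b = fst B; \<alpha> = snd A; \<beta> = snd B in
        cmps C [mb (mc T0c \<alpha>) (mc T0c \<beta>), R bt bt a b, mc \<nu> (I (ob a b))] =
          cmp C (mb (invm C (oc bt a) a (lu Mc a)) (invm C (oc bt b) b (lu Mc b)))
                (lu Mc (ob a b)) \<and>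
        cmps C [mb (mc \<alpha> T0c) (mc \<beta> T0c), R a b bt bt, mc (I (ob a b)) \<nu>] =
          cmp C (mb (invm C (oc a bt) a (ru Mc a)) (invm C (oc b bt) b (ru Mc b)))
                (ru Mc (ob a b)) \<and>
        cmps C [mb \<omega> (I (oc a b)), mb (mc T0b T0b) (mc \<alpha> \<beta>), R on a on b] =
          cmp C (invm C (ob on (oc a b)) (oc a b) (lu Mb (oc a b)))
                (mc (lu Mb a) (lu Mb b)) \<and>
        cmps C [mb (I (oc a b)) \<omega>, mb (mc \<alpha> \<beta>) (mc T0b T0b), R a on b on] =
          cmp C (invm C (ob (oc a b) on) (oc a b) (ru Mb (oc a b)))
                (mc (ru Mb a) (ru Mb b)))) \<and>
     \<comment> \<open>(R-lift)\<close>
     (\<forall>a\<in>Obj C. \<forall>b\<in>Obj C. \<forall>c\<in>Obj C. \<forall>d\<in>Obj C.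
        cmps C [mb (mc (\<mu> a) (\<mu> c)) (mc (\<mu> b) (\<mu> d)), R (T' a) (T' b) (T' c) (T' d),
                mc (T2b a b) (T2b c d), T2c (ob a b) (ob c d)] =
        cmps C [mb (mc (\<mu> a) (\<mu> c)) (mc (\<mu> b) (\<mu> d)),
                mb (T2c (T' a) (T' c)) (T2c (T' b) (T' d)),
                T2b (oc (T' a) (T' c)) (oc (T' b) (T' d)), Tf (R a b c d)]) \<and>
     \<comment> \<open>(R-1), with the suppressed associators made explicit\<close>
     (\<forall>a\<in>Obj C. \<forall>b\<in>Obj C. \<forall>c\<in>Obj C. \<forall>d\<in>Obj C. \<forall>x\<in>Obj C. \<forall>y\<in>Obj C.
        cmps C [mb (asc Mc (T' a) (T' c) (T' x)) (asc Mc (T' b) (T' d) (T' y)),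
                mb (mc (mc (\<mu> a) (\<mu> c)) (I (T' x))) (mc (mc (\<mu> b) (\<mu> d)) (I (T' y))),
                mb (mc (T2c (T' a) (T' c)) (I (T' x))) (mc (T2c (T' b) (T' d)) (I (T' y))),
                R (oc (T' a) (T' c)) (oc (T' b) (T' d)) x y,
                mc (R a b c d) (I (ob x y))] =
        cmps C [mb (mc (I (T' a)) (mc (\<mu> c) (\<mu> x))) (mc (I (T' b)) (mc (\<mu> d) (\<mu> y))),
                mb (mc (I (T' a)) (T2c (T' c) (T' x))) (mc (I (T' b)) (T2c (T' d) (T' y))),
                R a b (oc (T' c) (T' x)) (oc (T' d) (T' y)),
                mc (I (ob a b)) (R c d x y),
                asc Mc (ob a b) (ob c d) (ob x y)]) \<and>
     \<comment> \<open>(R-2), with the suppressed associator made explicit\<close>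
     (\<forall>x\<in>Obj C. \<forall>a\<in>Obj C. \<forall>c\<in>Obj C. \<forall>y\<in>Obj C. \<forall>b\<in>Obj C. \<forall>d\<in>Obj C.
        cmps C [asc Mb (oc (T' x) (T' y)) (oc (T' a) (T' b)) (oc (T' c) (T' d)),
                mb (mb (mc (\<mu> x) (\<mu> y)) (mc (\<mu> a) (\<mu> b))) (I (oc (T' c) (T' d))),
                mb (R (T' x) (T' a) (T' y) (T' b)) (I (oc (T' c) (T' d))),
                mb (mc (T2b x a) (T2b y b)) (I (oc (T' c) (T' d))),
                R (ob x a) c (ob y b) d] =
        cmps C [mb (I (oc (T' x) (T' y))) (mb (mc (\<mu> a) (\<mu> b)) (mc (\<mu> c) (\<mu> d))),
                mb (I (oc (T' x) (T' y))) (R (T' a) (T' c) (T' b) (T' d)),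
                mb (I (oc (T' x) (T' y))) (mc (T2b a c) (T2b b d)),
                R x (ob a c) y (ob b d),
                mc (asc Mb x a c) (asc Mb y b d)]))"

end

theory Submission
  imports Defs
begin

text \<open>
  Write \<open>F a = (T a, \<mu> a)\<close> for the free algebra, so that
  \<open>R a b c d = \<xi> (F a) (F b) (F c) (F d) \<cdot> ((\<eta> a \<bullet> \<eta> b) \<odot> (\<eta> c \<bullet> \<eta> d))\<close>.
  By naturality of \<open>\<xi>\<close> in algebra morphisms, postcomposing \<open>R\<close> with algebra morphisms
  \<open>f : F a \<rightarrow> A\<close>, \<dots> yields \<open>\<xi> A B X Y\<close> precomposed with the transposes \<open>f \<cdot> \<eta> a\<close>, \<dots>;
  for the structure maps of algebras the transposes are identities, so \<open>\<xi>\<close> is recovered from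
  \<open>R\<close>. Every R-matrix axiom thereby becomes the corresponding duoidal axiom for \<open>\<xi>\<close>:
  (R-unit) is (U), (R-1) and (R-2) are (A1) and (A2) at free algebras precomposed with units,
  and (R-lift) says that \<open>\<xi>\<close> at free algebras is a morphism of \<open>T\<close>-algebras.
\<close>

locale cat =
  fixes C :: "('o,'m) category"
  assumes category: "category C"
begin

abbreviation comp :: "'m \<Rightarrow> 'm \<Rightarrow> 'm" (infixr \<open>\<cdot>\<close> 55) where "g \<cdot> f \<equiv> cmp C g f"

lemma hom_objs: "f \<in> Hom C a b \<Longrightarrow> a \<in> Obj C \<and> b \<in> Obj C"
  using category unfolding category_def by blast

lemma id_hom: "a \<in> Obj C \<Longrightarrow> idm C a \<in> Hom C a a"
  using category unfolding category_def by blast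

lemma comp_hom: "f \<in> Hom C a b \<Longrightarrow> g \<in> Hom C b c \<Longrightarrow> g \<cdot> f \<in> Hom C a c"
  using category unfolding category_def by blast

lemma comp_id_left: "f \<in> Hom C a b \<Longrightarrow> idm C b \<cdot> f = f"
  using category unfolding category_def by blast

lemma comp_id_right: "f \<in> Hom C a b \<Longrightarrow> f \<cdot> idm C a = f"
  using category unfolding category_def by blast

lemma cat_assoc:
  "f \<in> Hom C a b \<Longrightarrow> g \<in> Hom C b c \<Longrightarrow> h \<in> Hom C c d \<Longrightarrow> h \<cdot> g \<cdot> f = (h \<cdot> g) \<cdot> f"
  using category unfolding category_def by blast

end

locale bimonad_on =
  fixes C :: "('o,'m) category" and M :: "('o,'m) monoidal" and T :: "('o,'m) monad"
    and T2 :: "'o \<Rightarrow> 'o \<Rightarrow> 'm" and T0 :: 'm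
  assumes bimonad: "bimonad C M T T2 T0"
begin

lemma monoidal: "monoidal_cat C M" and monad: "monad C T"
  using bimonad unfolding bimonad_def by auto

sublocale cat C
  using monoidal unfolding monoidal_cat_def by unfold_locales blast

lemma unit_obj: "unt M \<in> Obj C"
  and tensor_obj: "a \<in> Obj C \<Longrightarrow> b \<in> Obj C \<Longrightarrow> tob M a b \<in> Obj C"
  and tensor_hom: "f \<in> Hom C a b \<Longrightarrow> g \<in> Hom C c d \<Longrightarrow> tm M f g \<in> Hom C (tob M a c) (tob M b d)"
  and tensor_id: "a \<in> Obj C \<Longrightarrow> b \<in> Obj C \<Longrightarrow> tm M (idm C a) (idm C b) = idm C (tob M a b)"
  and tensor_comp: "f \<in> Hom C a b \<Longrightarrow> f' \<in> Hom C b c \<Longrightarrow> g \<in> Hom C a' b' \<Longrightarrow> g' \<in> Hom C b' c' \<Longrightarrow>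
        tm M (f' \<cdot> f) (g' \<cdot> g) = tm M f' g' \<cdot> tm M f g"
  and asc_natural: "f \<in> Hom C a a' \<Longrightarrow> g \<in> Hom C b b' \<Longrightarrow> h \<in> Hom C c c' \<Longrightarrow>
        asc M a' b' c' \<cdot> tm M (tm M f g) h = tm M f (tm M g h) \<cdot> asc M a b c"
  using monoidal unfolding monoidal_cat_def by auto

lemma asc_hom:
  "a \<in> Obj C \<Longrightarrow> b \<in> Obj C \<Longrightarrow> c \<in> Obj C \<Longrightarrow>
     asc M a b c \<in> Hom C (tob M (tob M a b) c) (tob M a (tob M b c))"
  using monoidal unfolding monoidal_cat_def by (auto simp: iso_def)

lemma T_obj: "a \<in> Obj C \<Longrightarrow> Tob T a \<in> Obj C"
  and T_hom: "f \<in> Hom C a b \<Longrightarrow> Tm T f \<in> Hom C (Tob T a) (Tob T b)"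
  and T_id: "a \<in> Obj C \<Longrightarrow> Tm T (idm C a) = idm C (Tob T a)"
  and T_comp: "f \<in> Hom C a b \<Longrightarrow> g \<in> Hom C b c \<Longrightarrow> Tm T (g \<cdot> f) = Tm T g \<cdot> Tm T f"
  and mu_hom: "a \<in> Obj C \<Longrightarrow> mu T a \<in> Hom C (Tob T (Tob T a)) (Tob T a)"
  and eta_hom: "a \<in> Obj C \<Longrightarrow> eta T a \<in> Hom C a (Tob T a)"
  and mu_natural: "f \<in> Hom C a b \<Longrightarrow> mu T b \<cdot> Tm T (Tm T f) = Tm T f \<cdot> mu T a"
  and eta_natural: "f \<in> Hom C a b \<Longrightarrow> eta T b \<cdot> f = Tm T f \<cdot> eta T a"
  and mu_assoc: "a \<in> Obj C \<Longrightarrow> mu T a \<cdot> Tm T (mu T a) = mu T a \<cdot> mu T (Tob T a)"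
  and mu_eta: "a \<in> Obj C \<Longrightarrow> mu T a \<cdot> eta T (Tob T a) = idm C (Tob T a)"
  and mu_T_eta: "a \<in> Obj C \<Longrightarrow> mu T a \<cdot> Tm T (eta T a) = idm C (Tob T a)"
  using monad unfolding monad_def by auto

lemma T2_hom: "x \<in> Obj C \<Longrightarrow> y \<in> Obj C \<Longrightarrow> T2 x y \<in> Hom C (Tob T (tob M x y)) (tob M (Tob T x) (Tob T y))"
  and T0_hom: "T0 \<in> Hom C (Tob T (unt M)) (unt M)"
  and T2_natural: "f \<in> Hom C x x' \<Longrightarrow> g \<in> Hom C y y' \<Longrightarrow>
        T2 x' y' \<cdot> Tm T (tm M f g) = tm M (Tm T f) (Tm T g) \<cdot> T2 x y"
  and T2_mu: "x \<in> Obj C \<Longrightarrow> y \<in> Obj C \<Longrightarrow>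
        T2 x y \<cdot> mu T (tob M x y) = tm M (mu T x) (mu T y) \<cdot> T2 (Tob T x) (Tob T y) \<cdot> Tm T (T2 x y)"
  and T2_eta: "x \<in> Obj C \<Longrightarrow> y \<in> Obj C \<Longrightarrow> T2 x y \<cdot> eta T (tob M x y) = tm M (eta T x) (eta T y)"
  using bimonad unfolding bimonad_def by auto

lemmas hom_intros = id_hom comp_hom tensor_hom asc_hom T_hom mu_hom eta_hom T2_hom T0_hom
  unit_obj tensor_obj T_obj

lemma alg_carrier: "alg C T A \<Longrightarrow> fst A \<in> Obj C"
  and alg_structure_hom: "alg C T A \<Longrightarrow> snd A \<in> Hom C (Tob T (fst A)) (fst A)"
  and alg_unit: "alg C T A \<Longrightarrow> snd A \<cdot> eta T (fst A) = idm C (fst A)"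
  and alg_mult: "alg C T A \<Longrightarrow> snd A \<cdot> Tm T (snd A) = snd A \<cdot> mu T (fst A)"
  unfolding alg_def by blast+

lemma alg_lift_pair:
  assumes A: "alg C T (a, \<alpha>)" and B: "alg C T (b, \<beta>)"
  shows "alg C T (tob M a b, tm M \<alpha> \<beta> \<cdot> T2 a b)"
proof -
  have ty: "a \<in> Obj C" "b \<in> Obj C" "\<alpha> \<in> Hom C (Tob T a) a" "\<beta> \<in> Hom C (Tob T b) b"
    using alg_carrier[OF A] alg_carrier[OF B] alg_structure_hom[OF A] alg_structure_hom[OF B] by simp_all
  have "(tm M \<alpha> \<beta> \<cdot> T2 a b) \<cdot> eta T (tob M a b) = tm M \<alpha> \<beta> \<cdot> T2 a b \<cdot> eta T (tob M a b)"
    by (rule cat_assoc[symmetric]; blast intro: hom_intros ty)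
  also have "\<dots> = tm M \<alpha> \<beta> \<cdot> tm M (eta T a) (eta T b)"
    using ty by (simp add: T2_eta)
  also have "\<dots> = tm M (\<alpha> \<cdot> eta T a) (\<beta> \<cdot> eta T b)"
    by (subst tensor_comp; blast intro: hom_intros ty)
  also have "\<dots> = idm C (tob M a b)"
    using A B ty by (simp add: alg_def tensor_id)
  finally have unit: "(tm M \<alpha> \<beta> \<cdot> T2 a b) \<cdot> eta T (tob M a b) = idm C (tob M a b)" .
  have "(tm M \<alpha> \<beta> \<cdot> T2 a b) \<cdot> Tm T (tm M \<alpha> \<beta> \<cdot> T2 a b)
      = (tm M \<alpha> \<beta> \<cdot> T2 a b) \<cdot> Tm T (tm M \<alpha> \<beta>) \<cdot> Tm T (T2 a b)"
    by (subst T_comp; blast intro: hom_intros ty)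
  also have "\<dots> = tm M \<alpha> \<beta> \<cdot> (T2 a b \<cdot> Tm T (tm M \<alpha> \<beta>)) \<cdot> Tm T (T2 a b)"
    by (subst cat_assoc[symmetric], (blast intro: hom_intros ty)+, subst cat_assoc; blast intro: hom_intros ty)
  also have "\<dots> = tm M \<alpha> \<beta> \<cdot> (tm M (Tm T \<alpha>) (Tm T \<beta>) \<cdot> T2 (Tob T a) (Tob T b)) \<cdot> Tm T (T2 a b)"
    by (subst T2_natural; blast intro: hom_intros ty)
  also have "\<dots> = (tm M \<alpha> \<beta> \<cdot> tm M (Tm T \<alpha>) (Tm T \<beta>)) \<cdot> T2 (Tob T a) (Tob T b) \<cdot> Tm T (T2 a b)"
    by (subst cat_assoc[symmetric], (blast intro: hom_intros ty)+, rule cat_assoc; blast intro: hom_intros ty)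
  also have "\<dots> = tm M (\<alpha> \<cdot> Tm T \<alpha>) (\<beta> \<cdot> Tm T \<beta>) \<cdot> T2 (Tob T a) (Tob T b) \<cdot> Tm T (T2 a b)"
    by (subst tensor_comp; blast intro: hom_intros ty)
  also have "\<dots> = tm M (\<alpha> \<cdot> mu T a) (\<beta> \<cdot> mu T b) \<cdot> T2 (Tob T a) (Tob T b) \<cdot> Tm T (T2 a b)"
    using alg_mult[OF A] alg_mult[OF B] by simp
  also have "\<dots> = tm M \<alpha> \<beta> \<cdot> tm M (mu T a) (mu T b) \<cdot> T2 (Tob T a) (Tob T b) \<cdot> Tm T (T2 a b)"
    by (subst tensor_comp, (blast intro: hom_intros ty)+, rule cat_assoc[symmetric]; blast intro: hom_intros ty)
  also have "\<dots> = tm M \<alpha> \<beta> \<cdot> T2 a b \<cdot> mu T (tob M a b)"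
    using ty by (simp add: T2_mu)
  also have "\<dots> = (tm M \<alpha> \<beta> \<cdot> T2 a b) \<cdot> mu T (tob M a b)"
    by (rule cat_assoc; blast intro: hom_intros ty)
  finally show ?thesis
    using unit ty unfolding alg_def by (auto intro: hom_intros)
qed

lemma fst_lift [simp]: "fst (lift C M T2 A B) = tob M (fst A) (fst B)"
  by (simp add: lift_def)

lemma alg_lift: "alg C T A \<Longrightarrow> alg C T B \<Longrightarrow> alg C T (lift C M T2 A B)"
  by (cases A, cases B) (simp add: lift_def alg_lift_pair)

lemma fst_free_alg [simp]: "fst (free_alg T a) = Tob T a"
  and snd_free_alg [simp]: "snd (free_alg T a) = mu T a"
  by (simp_all add: free_alg_def)

lemma alg_free_alg: "a \<in> Obj C \<Longrightarrow> alg C T (free_alg T a)"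
  unfolding alg_def by (auto simp: mu_assoc mu_eta intro: hom_intros)

lemma alg_hom_hom: "alg_hom C T A B f \<Longrightarrow> f \<in> Hom C (fst A) (fst B)"
  and alg_hom_target: "alg_hom C T A B f \<Longrightarrow> alg C T B"
  unfolding alg_hom_def by blast+

lemma alg_hom_structure: "alg C T A \<Longrightarrow> alg_hom C T (free_alg T (fst A)) A (snd A)"
  unfolding alg_hom_def by (simp add: alg_free_alg alg_carrier alg_structure_hom alg_mult)

lemma alg_hom_Tm:
  assumes f: "f \<in> Hom C a b"
  shows "alg_hom C T (free_alg T a) (free_alg T b) (Tm T f)"
  using hom_objs[OF f] unfolding alg_hom_def
  by (auto simp: mu_natural[OF f] alg_free_alg T_hom[OF f])

lemma alg_hom_free_id: "a \<in> Obj C \<Longrightarrow> alg_hom C T (free_alg T a) (free_alg T a) (idm C (Tob T a))"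
  using alg_hom_Tm[OF id_hom] by (simp add: T_id)

lemma alg_hom_T2:
  assumes x: "x \<in> Obj C" and y: "y \<in> Obj C"
  shows "alg_hom C T (free_alg T (tob M x y)) (lift C M T2 (free_alg T x) (free_alg T y)) (T2 x y)"
proof -
  have "T2 x y \<cdot> mu T (tob M x y) = tm M (mu T x) (mu T y) \<cdot> T2 (Tob T x) (Tob T y) \<cdot> Tm T (T2 x y)"
    by (rule T2_mu[OF x y])
  also have "\<dots> = (tm M (mu T x) (mu T y) \<cdot> T2 (Tob T x) (Tob T y)) \<cdot> Tm T (T2 x y)"
    by (rule cat_assoc; blast intro: hom_intros x y)
  finally have "T2 x y \<cdot> mu T (tob M x y) = \<dots>" .
  moreover have "alg C T (lift C M T2 (free_alg T x) (free_alg T y))"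
    by (intro alg_lift alg_free_alg x y)
  ultimately show ?thesis
    using x y unfolding alg_hom_def by (auto simp: lift_def alg_free_alg tensor_obj T2_hom)
qed

lemma alg_hom_free_lift_structure:
  "a \<in> Obj C \<Longrightarrow> c \<in> Obj C \<Longrightarrow>
     alg_hom C T (free_alg T (tob M (Tob T a) (Tob T c))) (lift C M T2 (free_alg T a) (free_alg T c))
       (tm M (mu T a) (mu T c) \<cdot> T2 (Tob T a) (Tob T c))"
  using alg_hom_structure[OF alg_lift[OF alg_free_alg alg_free_alg]] by (simp add: lift_def)

lemma free_lift_structure_unit:
  "a \<in> Obj C \<Longrightarrow> c \<in> Obj C \<Longrightarrow>
     (tm M (mu T a) (mu T c) \<cdot> T2 (Tob T a) (Tob T c)) \<cdot> eta T (tob M (Tob T a) (Tob T c))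
       = idm C (tob M (Tob T a) (Tob T c))"
  using alg_unit[OF alg_lift[OF alg_free_alg alg_free_alg]] by (simp add: lift_def)

lemma free_lift_structure_Tm_eta:
  assumes a: "a \<in> Obj C" and b: "b \<in> Obj C"
  shows "(tm M (mu T a) (mu T b) \<cdot> T2 (Tob T a) (Tob T b)) \<cdot> Tm T (tm M (eta T a) (eta T b)) = T2 a b"
proof -
  have "(tm M (mu T a) (mu T b) \<cdot> T2 (Tob T a) (Tob T b)) \<cdot> Tm T (tm M (eta T a) (eta T b))
      = tm M (mu T a) (mu T b) \<cdot> T2 (Tob T a) (Tob T b) \<cdot> Tm T (tm M (eta T a) (eta T b))"
    by (rule cat_assoc[symmetric]; blast intro: hom_intros a b)
  also have "\<dots> = tm M (mu T a) (mu T b) \<cdot> tm M (Tm T (eta T a)) (Tm T (eta T b)) \<cdot> T2 a b"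
    by (subst T2_natural; blast intro: hom_intros a b)
  also have "\<dots> = tm M (mu T a \<cdot> Tm T (eta T a)) (mu T b \<cdot> Tm T (eta T b)) \<cdot> T2 a b"
    by (subst tensor_comp, (blast intro: hom_intros a b)+, rule cat_assoc; blast intro: hom_intros a b)
  also have "\<dots> = T2 a b"
    using a b by (simp add: mu_T_eta tensor_id T_obj comp_id_left[OF T2_hom])
  finally show ?thesis .
qed

end

locale duoidal_lifting =
  fixes C :: "('o,'m) category" and Mc Mb :: "('o,'m) monoidal" and T :: "('o,'m) monad"
    and T2c T2b :: "'o \<Rightarrow> 'o \<Rightarrow> 'm" and T0c T0b :: 'm
    and \<xi> :: "'o \<times> 'm \<Rightarrow> 'o \<times> 'm \<Rightarrow> 'o \<times> 'm \<Rightarrow> 'o \<times> 'm \<Rightarrow> 'm"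
    and \<nu> \<omega> \<iota> :: 'm
  assumes sep_opmonoidal: "sep_opmonoidal_monad C Mc Mb T T2c T0c T2b T0b"
    and duoidal: "duoidal_on_algebras C Mc Mb T T2c T0c T2b T0b \<xi> \<nu> \<omega> \<iota>"
begin

sublocale circ: bimonad_on C Mc T T2c T0c
  using sep_opmonoidal unfolding sep_opmonoidal_monad_def by unfold_locales blast

sublocale bullet: bimonad_on C Mb T T2b T0b
  using sep_opmonoidal unfolding sep_opmonoidal_monad_def by unfold_locales blast

abbreviation tc :: "'m \<Rightarrow> 'm \<Rightarrow> 'm" (infix \<open>\<odot>\<close> 65) where "f \<odot> g \<equiv> tm Mc f g"
abbreviation tb :: "'m \<Rightarrow> 'm \<Rightarrow> 'm" (infix \<open>\<bullet>\<close> 65) where "f \<bullet> g \<equiv> tm Mb f g"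
abbreviation "oc \<equiv> tob Mc"
abbreviation "ob \<equiv> tob Mb"
abbreviation "I \<equiv> idm C"
abbreviation "T' \<equiv> Tob T"
abbreviation "\<eta> \<equiv> eta T"
abbreviation "\<mu> \<equiv> mu T"
abbreviation "F \<equiv> free_alg T"
abbreviation "lc \<equiv> lift C Mc T2c"
abbreviation "lb \<equiv> lift C Mb T2b"
abbreviation "eta4 a b c d \<equiv> (\<eta> a \<bullet> \<eta> b) \<odot> (\<eta> c \<bullet> \<eta> d)"
abbreviation "R a b c d \<equiv> \<xi> (F a) (F b) (F c) (F d) \<cdot> eta4 a b c d"

lemmas duoidal_conditions = duoidal[unfolded duoidal_on_algebras_def Let_def]

lemma xi_alg_hom:
  "alg C T A \<Longrightarrow> alg C T B \<Longrightarrow> alg C T X \<Longrightarrow> alg C T Y \<Longrightarrow>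
     alg_hom C T (lc (lb A B) (lb X Y)) (lb (lc A X) (lc B Y)) (\<xi> A B X Y)"
  using duoidal_conditions[THEN conjunct1] by blast

lemma xi_natural:
  "alg_hom C T A A' f \<Longrightarrow> alg_hom C T B B' g \<Longrightarrow> alg_hom C T X X' h \<Longrightarrow> alg_hom C T Y Y' k \<Longrightarrow>
     \<xi> A' B' X' Y' \<cdot> (f \<bullet> g) \<odot> (h \<bullet> k) = (f \<odot> h) \<bullet> (g \<odot> k) \<cdot> \<xi> A B X Y"
  using duoidal_conditions[THEN conjunct2, THEN conjunct1] by blast

lemma unit_data: "unit_data_ok C Mc Mb T T2c T0c T2b T0b \<nu> \<omega> \<iota>"
  using duoidal_conditions by (elim conjE)

text \<open>Recording the carrier as a separate argument lets typing goals for \<open>\<xi>\<close> be closed by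
  intro rules alone, without rewriting \<open>fst (F a)\<close> to \<open>T' a\<close>.\<close>

definition alg_over :: "'o \<times> 'm \<Rightarrow> 'o \<Rightarrow> bool" where
  "alg_over A a \<longleftrightarrow> alg C T A \<and> fst A = a"

lemma alg_Bot: "alg C T (unt Mc, T0c)" and alg_One: "alg C T (unt Mb, T0b)"
  using unit_data unfolding unit_data_ok_def Let_def alg_hom_def by blast+

lemma nu_hom: "\<nu> \<in> Hom C (unt Mc) (ob (unt Mc) (unt Mc))"
  using unit_data unfolding unit_data_ok_def Let_def alg_hom_def by (auto simp: lift_def)

lemma alg_over_alg: "alg C T A \<Longrightarrow> alg_over A (fst A)"
  and alg_over_free: "a \<in> Obj C \<Longrightarrow> alg_over (F a) (T' a)"
  and alg_over_lc: "alg_over A a \<Longrightarrow> alg_over B b \<Longrightarrow> alg_over (lc A B) (oc a b)"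
  and alg_over_lb: "alg_over A a \<Longrightarrow> alg_over B b \<Longrightarrow> alg_over (lb A B) (ob a b)"
  unfolding alg_over_def
  by (auto simp: circ.alg_free_alg circ.alg_lift bullet.alg_lift)

lemma xi_hom:
  assumes "alg_over A a" "alg_over B b" "alg_over X x" "alg_over Y y"
  shows "\<xi> A B X Y \<in> Hom C (oc (ob a b) (ob x y)) (ob (oc a x) (oc b y))"
  using xi_alg_hom[of A B X Y] assms unfolding alg_over_def alg_hom_def by (auto simp: lift_def)

lemmas typing = circ.hom_intros bullet.tensor_hom bullet.asc_hom bullet.T2_hom bullet.T0_hom
  bullet.unit_obj bullet.tensor_obj circ.alg_carrier circ.alg_structure_hom
  xi_hom alg_over_alg alg_over_free alg_over_lc alg_over_lb
  nu_hom

lemma R_hom: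
  "a \<in> Obj C \<Longrightarrow> b \<in> Obj C \<Longrightarrow> c \<in> Obj C \<Longrightarrow> d \<in> Obj C \<Longrightarrow>
     R a b c d \<in> Hom C (oc (ob a b) (ob c d)) (ob (oc (T' a) (T' c)) (oc (T' b) (T' d)))"
  by (blast intro: typing)

lemma alg_homs_after_R:
  assumes objs: "a \<in> Obj C" "b \<in> Obj C" "c \<in> Obj C" "d \<in> Obj C"
    and f: "alg_hom C T (F a) A f" and g: "alg_hom C T (F b) B g"
    and h: "alg_hom C T (F c) X h" and k: "alg_hom C T (F d) Y k"
  shows "(f \<odot> h) \<bullet> (g \<odot> k) \<cdot> R a b c d
    = \<xi> A B X Y \<cdot> ((f \<cdot> \<eta> a) \<bullet> (g \<cdot> \<eta> b)) \<odot> ((h \<cdot> \<eta> c) \<bullet> (k \<cdot> \<eta> d))"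
proof -
  have ty: "f \<in> Hom C (T' a) (fst A)" "g \<in> Hom C (T' b) (fst B)"
    "h \<in> Hom C (T' c) (fst X)" "k \<in> Hom C (T' d) (fst Y)"
    "alg C T A" "alg C T B" "alg C T X" "alg C T Y"
    using f g h k by (auto dest: circ.alg_hom_hom circ.alg_hom_target)
  note tt = ty objs
  have "(f \<odot> h) \<bullet> (g \<odot> k) \<cdot> R a b c d = ((f \<odot> h) \<bullet> (g \<odot> k) \<cdot> \<xi> (F a) (F b) (F c) (F d)) \<cdot> eta4 a b c d"
    by (rule circ.cat_assoc; blast intro: typing tt)
  also have "\<dots> = (\<xi> A B X Y \<cdot> (f \<bullet> g) \<odot> (h \<bullet> k)) \<cdot> eta4 a b c d"
    by (simp add: xi_natural[OF f g h k])
  also have "\<dots> = \<xi> A B X Y \<cdot> (f \<bullet> g) \<odot> (h \<bullet> k) \<cdot> eta4 a b c d"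
    by (rule circ.cat_assoc[symmetric]; blast intro: typing tt)
  also have "\<dots> = \<xi> A B X Y \<cdot> (f \<bullet> g \<cdot> \<eta> a \<bullet> \<eta> b) \<odot> (h \<bullet> k \<cdot> \<eta> c \<bullet> \<eta> d)"
    by (subst circ.tensor_comp; blast intro: typing tt)
  also have "\<dots> = \<xi> A B X Y \<cdot> ((f \<cdot> \<eta> a) \<bullet> (g \<cdot> \<eta> b)) \<odot> ((h \<cdot> \<eta> c) \<bullet> (k \<cdot> \<eta> d))"
    by (subst (1 2) bullet.tensor_comp; blast intro: typing tt)
  finally show ?thesis .
qed

lemma structure_maps_after_R:
  assumes A: "alg C T A" and B: "alg C T B" and X: "alg C T X" and Y: "alg C T Y"
  shows "(snd A \<odot> snd X) \<bullet> (snd B \<odot> snd Y) \<cdot> R (fst A) (fst B) (fst X) (fst Y) = \<xi> A B X Y"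
proof -
  note tt = A B X Y
  have "(snd A \<odot> snd X) \<bullet> (snd B \<odot> snd Y) \<cdot> R (fst A) (fst B) (fst X) (fst Y)
      = \<xi> A B X Y \<cdot> (I (fst A) \<bullet> I (fst B)) \<odot> (I (fst X) \<bullet> I (fst Y))"
    using alg_homs_after_R[OF _ _ _ _ circ.alg_hom_structure circ.alg_hom_structure
        circ.alg_hom_structure circ.alg_hom_structure, OF _ _ _ _ A B X Y]
    by (simp add: circ.alg_carrier circ.alg_unit tt)
  also have "\<dots> = \<xi> A B X Y"
    using tt by (simp add: circ.tensor_id bullet.tensor_id circ.alg_carrier bullet.tensor_obj
        circ.comp_id_right[OF xi_hom] alg_over_alg)
  finally show ?thesis .
qed

lemma R_mu:
  "a \<in> Obj C \<Longrightarrow> b \<in> Obj C \<Longrightarrow> c \<in> Obj C \<Longrightarrow> d \<in> Obj C \<Longrightarrow>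
     (\<mu> a \<odot> \<mu> c) \<bullet> (\<mu> b \<odot> \<mu> d) \<cdot> R (T' a) (T' b) (T' c) (T' d) = \<xi> (F a) (F b) (F c) (F d)"
  using structure_maps_after_R[OF circ.alg_free_alg circ.alg_free_alg circ.alg_free_alg circ.alg_free_alg]
  by simp

lemma R_natural:
  assumes f: "f \<in> Hom C a a'" and g: "g \<in> Hom C b b'" and h: "h \<in> Hom C c c'" and k: "k \<in> Hom C d d'"
  shows "R a' b' c' d' \<cdot> (f \<bullet> g) \<odot> (h \<bullet> k) = (Tm T f \<odot> Tm T h) \<bullet> (Tm T g \<odot> Tm T k) \<cdot> R a b c d"
proof -
  have objs: "a \<in> Obj C" "b \<in> Obj C" "c \<in> Obj C" "d \<in> Obj C"
    "a' \<in> Obj C" "b' \<in> Obj C" "c' \<in> Obj C" "d' \<in> Obj C"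
    using f g h k by (auto dest: circ.hom_objs)
  note tt = objs f g h k
  have "R a' b' c' d' \<cdot> (f \<bullet> g) \<odot> (h \<bullet> k)
      = \<xi> (F a') (F b') (F c') (F d') \<cdot> eta4 a' b' c' d' \<cdot> (f \<bullet> g) \<odot> (h \<bullet> k)"
    by (rule circ.cat_assoc[symmetric]; blast intro: typing tt)
  also have "\<dots> = \<xi> (F a') (F b') (F c') (F d') \<cdot> ((\<eta> a' \<cdot> f) \<bullet> (\<eta> b' \<cdot> g)) \<odot> ((\<eta> c' \<cdot> h) \<bullet> (\<eta> d' \<cdot> k))"
    by (subst (1 2) bullet.tensor_comp, (blast intro: typing tt)+, subst circ.tensor_comp;
        blast intro: typing tt)
  also have "\<dots> = \<xi> (F a') (F b') (F c') (F d')
      \<cdot> ((Tm T f \<cdot> \<eta> a) \<bullet> (Tm T g \<cdot> \<eta> b)) \<odot> ((Tm T h \<cdot> \<eta> c) \<bullet> (Tm T k \<cdot> \<eta> d))"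
    using tt by (simp add: circ.eta_natural)
  also have "\<dots> = (Tm T f \<odot> Tm T h) \<bullet> (Tm T g \<odot> Tm T k) \<cdot> R a b c d"
    using alg_homs_after_R[OF objs(1-4) circ.alg_hom_Tm circ.alg_hom_Tm circ.alg_hom_Tm circ.alg_hom_Tm,
        OF f g h k] ..
  finally show ?thesis .
qed

lemmas xi_unit_conditions =
  duoidal_conditions[THEN conjunct2, THEN conjunct2, THEN conjunct2, THEN conjunct2, THEN conjunct2,
    rule_format, unfolded Let_def]

lemma R_unit:
  assumes A: "alg C T A" and B: "alg C T B"
  defines "a \<equiv> fst A" and "b \<equiv> fst B" and "\<alpha> \<equiv> snd A" and "\<beta> \<equiv> snd B"
  shows "cmps C [(T0c \<odot> \<alpha>) \<bullet> (T0c \<odot> \<beta>), R (unt Mc) (unt Mc) a b, \<nu> \<odot> I (ob a b)]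
        = \<xi> (unt Mc, T0c) (unt Mc, T0c) A B \<cdot> \<nu> \<odot> I (ob a b)"
    and "cmps C [(\<alpha> \<odot> T0c) \<bullet> (\<beta> \<odot> T0c), R a b (unt Mc) (unt Mc), I (ob a b) \<odot> \<nu>]
        = \<xi> A B (unt Mc, T0c) (unt Mc, T0c) \<cdot> I (ob a b) \<odot> \<nu>"
    and "cmps C [\<omega> \<bullet> I (oc a b), (T0b \<odot> T0b) \<bullet> (\<alpha> \<odot> \<beta>), R (unt Mb) a (unt Mb) b]
        = \<omega> \<bullet> I (oc a b) \<cdot> \<xi> (unt Mb, T0b) A (unt Mb, T0b) B"
    and "cmps C [I (oc a b) \<bullet> \<omega>, (\<alpha> \<odot> \<beta>) \<bullet> (T0b \<odot> T0b), R a (unt Mb) b (unt Mb)]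
        = I (oc a b) \<bullet> \<omega> \<cdot> \<xi> A (unt Mb, T0b) B (unt Mb, T0b)"
proof -
  have ty: "a \<in> Obj C" "b \<in> Obj C" "\<alpha> \<in> Hom C (T' a) a" "\<beta> \<in> Hom C (T' b) b"
    unfolding assms using A B by (blast intro: typing)+
  have "cmps C [(T0c \<odot> \<alpha>) \<bullet> (T0c \<odot> \<beta>), R (unt Mc) (unt Mc) a b, \<nu> \<odot> I (ob a b)]
      = ((T0c \<odot> \<alpha>) \<bullet> (T0c \<odot> \<beta>) \<cdot> R (unt Mc) (unt Mc) a b) \<cdot> \<nu> \<odot> I (ob a b)"
    by (simp, rule circ.cat_assoc; blast intro: typing ty)
  then show "cmps C [(T0c \<odot> \<alpha>) \<bullet> (T0c \<odot> \<beta>), R (unt Mc) (unt Mc) a b, \<nu> \<odot> I (ob a b)]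
      = \<xi> (unt Mc, T0c) (unt Mc, T0c) A B \<cdot> \<nu> \<odot> I (ob a b)"
    using structure_maps_after_R[OF alg_Bot alg_Bot A B] unfolding assms by simp
  have "cmps C [(\<alpha> \<odot> T0c) \<bullet> (\<beta> \<odot> T0c), R a b (unt Mc) (unt Mc), I (ob a b) \<odot> \<nu>]
      = ((\<alpha> \<odot> T0c) \<bullet> (\<beta> \<odot> T0c) \<cdot> R a b (unt Mc) (unt Mc)) \<cdot> I (ob a b) \<odot> \<nu>"
    by (simp, rule circ.cat_assoc; blast intro: typing ty)
  then show "cmps C [(\<alpha> \<odot> T0c) \<bullet> (\<beta> \<odot> T0c), R a b (unt Mc) (unt Mc), I (ob a b) \<odot> \<nu>]
      = \<xi> A B (unt Mc, T0c) (unt Mc, T0c) \<cdot> I (ob a b) \<odot> \<nu>"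
    using structure_maps_after_R[OF A B alg_Bot alg_Bot] unfolding assms by simp
  show "cmps C [\<omega> \<bullet> I (oc a b), (T0b \<odot> T0b) \<bullet> (\<alpha> \<odot> \<beta>), R (unt Mb) a (unt Mb) b]
      = \<omega> \<bullet> I (oc a b) \<cdot> \<xi> (unt Mb, T0b) A (unt Mb, T0b) B"
    using structure_maps_after_R[OF alg_One A alg_One B] unfolding assms by simp
  show "cmps C [I (oc a b) \<bullet> \<omega>, (\<alpha> \<odot> \<beta>) \<bullet> (T0b \<odot> T0b), R a (unt Mb) b (unt Mb)]
      = I (oc a b) \<bullet> \<omega> \<cdot> \<xi> A (unt Mb, T0b) B (unt Mb, T0b)"
    using structure_maps_after_R[OF A alg_One B alg_One] unfolding assms by simp
qed

lemma lifted_free_structure_Tm_eta4: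
  assumes objs: "a \<in> Obj C" "b \<in> Obj C" "c \<in> Obj C" "d \<in> Obj C"
  shows "((\<mu> a \<bullet> \<mu> b \<cdot> T2b (T' a) (T' b)) \<odot> (\<mu> c \<bullet> \<mu> d \<cdot> T2b (T' c) (T' d))
            \<cdot> T2c (ob (T' a) (T' b)) (ob (T' c) (T' d))) \<cdot> Tm T (eta4 a b c d)
       = T2b a b \<odot> T2b c d \<cdot> T2c (ob a b) (ob c d)"
    (is "(?P1 \<odot> ?P2 \<cdot> ?T2) \<cdot> _ = _")
proof -
  have "(?P1 \<odot> ?P2 \<cdot> ?T2) \<cdot> Tm T (eta4 a b c d) = ?P1 \<odot> ?P2 \<cdot> ?T2 \<cdot> Tm T (eta4 a b c d)"
    by (rule circ.cat_assoc[symmetric]; blast intro: typing objs)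
  also have "\<dots> = ?P1 \<odot> ?P2 \<cdot> Tm T (\<eta> a \<bullet> \<eta> b) \<odot> Tm T (\<eta> c \<bullet> \<eta> d) \<cdot> T2c (ob a b) (ob c d)"
    by (subst circ.T2_natural; blast intro: typing objs)
  also have "\<dots> = (?P1 \<cdot> Tm T (\<eta> a \<bullet> \<eta> b)) \<odot> (?P2 \<cdot> Tm T (\<eta> c \<bullet> \<eta> d)) \<cdot> T2c (ob a b) (ob c d)"
    by (subst circ.tensor_comp, (blast intro: typing objs)+, rule circ.cat_assoc; blast intro: typing objs)
  also have "\<dots> = T2b a b \<odot> T2b c d \<cdot> T2c (ob a b) (ob c d)"
    using objs by (simp add: bullet.free_lift_structure_Tm_eta)
  finally show ?thesis .
qed

lemma R_lift:
  assumes objs: "a \<in> Obj C" "b \<in> Obj C" "c \<in> Obj C" "d \<in> Obj C"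
  shows "cmps C [(\<mu> a \<odot> \<mu> c) \<bullet> (\<mu> b \<odot> \<mu> d), R (T' a) (T' b) (T' c) (T' d),
                T2b a b \<odot> T2b c d, T2c (ob a b) (ob c d)]
       = cmps C [(\<mu> a \<odot> \<mu> c) \<bullet> (\<mu> b \<odot> \<mu> d), T2c (T' a) (T' c) \<bullet> T2c (T' b) (T' d),
                T2b (oc (T' a) (T' c)) (oc (T' b) (T' d)), Tm T (R a b c d)]"
proof -
  let ?X = "(\<mu> a \<odot> \<mu> c) \<bullet> (\<mu> b \<odot> \<mu> d)"
  let ?W = "T2c (T' a) (T' c) \<bullet> T2c (T' b) (T' d)"
  let ?V = "T2b (oc (T' a) (T' c)) (oc (T' b) (T' d))"
  let ?\<xi> = "\<xi> (F a) (F b) (F c) (F d)"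
  let ?source = "(\<mu> a \<bullet> \<mu> b \<cdot> T2b (T' a) (T' b)) \<odot> (\<mu> c \<bullet> \<mu> d \<cdot> T2b (T' c) (T' d))
                   \<cdot> T2c (ob (T' a) (T' b)) (ob (T' c) (T' d))"
  let ?target = "(\<mu> a \<odot> \<mu> c \<cdot> T2c (T' a) (T' c)) \<bullet> (\<mu> b \<odot> \<mu> d \<cdot> T2c (T' b) (T' d)) \<cdot> ?V"
  have xi_alg: "?\<xi> \<cdot> ?source = ?target \<cdot> Tm T ?\<xi>"
    using xi_alg_hom[OF circ.alg_free_alg circ.alg_free_alg circ.alg_free_alg circ.alg_free_alg, OF objs]
    by (simp add: alg_hom_def lift_def)
  have "cmps C [?X, R (T' a) (T' b) (T' c) (T' d), T2b a b \<odot> T2b c d, T2c (ob a b) (ob c d)]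
      = (?X \<cdot> R (T' a) (T' b) (T' c) (T' d)) \<cdot> T2b a b \<odot> T2b c d \<cdot> T2c (ob a b) (ob c d)"
    by (simp, rule circ.cat_assoc; blast intro: typing objs)
  also have "\<dots> = ?\<xi> \<cdot> ?source \<cdot> Tm T (eta4 a b c d)"
    using objs by (simp add: R_mu lifted_free_structure_Tm_eta4)
  also have "\<dots> = (?target \<cdot> Tm T ?\<xi>) \<cdot> Tm T (eta4 a b c d)"
    by (subst circ.cat_assoc, (blast intro: typing objs)+) (simp add: xi_alg)
  also have "\<dots> = ((?X \<cdot> ?W) \<cdot> ?V) \<cdot> Tm T (R a b c d)"
    by (subst circ.T_comp, (blast intro: typing objs)+, subst bullet.tensor_comp,
        (blast intro: typing objs)+, rule circ.cat_assoc[symmetric]; blast intro: typing objs)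
  also have "\<dots> = (?X \<cdot> ?W) \<cdot> ?V \<cdot> Tm T (R a b c d)"
    by (rule circ.cat_assoc[symmetric]; blast intro: typing objs)
  also have "\<dots> = cmps C [?X, ?W, ?V, Tm T (R a b c d)]"
    by (simp, rule circ.cat_assoc[symmetric]; blast intro: typing objs)
  finally show ?thesis .
qed

lemma interchange_comp:
  assumes "f \<in> Hom C a a'" "f' \<in> Hom C a' a''" "g \<in> Hom C b b'" "g' \<in> Hom C b' b''"
    and "h \<in> Hom C c c'" "h' \<in> Hom C c' c''" "k \<in> Hom C d d'" "k' \<in> Hom C d' d''"
  shows "(f' \<odot> g') \<bullet> (h' \<odot> k') \<cdot> (f \<odot> g) \<bullet> (h \<odot> k) = ((f' \<cdot> f) \<odot> (g' \<cdot> g)) \<bullet> ((h' \<cdot> h) \<odot> (k' \<cdot> k))"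
  by (subst (1 2) circ.tensor_comp, (blast intro: typing assms)+, rule bullet.tensor_comp[symmetric];
      blast intro: typing assms)

lemma R_assoc_circ_lhs:
  assumes objs: "a \<in> Obj C" "b \<in> Obj C" "c \<in> Obj C" "d \<in> Obj C" "x \<in> Obj C" "y \<in> Obj C"
  shows "cmps C [asc Mc (T' a) (T' c) (T' x) \<bullet> asc Mc (T' b) (T' d) (T' y),
                ((\<mu> a \<odot> \<mu> c) \<odot> I (T' x)) \<bullet> ((\<mu> b \<odot> \<mu> d) \<odot> I (T' y)),
                (T2c (T' a) (T' c) \<odot> I (T' x)) \<bullet> (T2c (T' b) (T' d) \<odot> I (T' y)),
                R (oc (T' a) (T' c)) (oc (T' b) (T' d)) x y,
                R a b c d \<odot> I (ob x y)]
       = cmps C [asc Mc (T' a) (T' c) (T' x) \<bullet> asc Mc (T' b) (T' d) (T' y),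
                \<xi> (lc (F a) (F c)) (lc (F b) (F d)) (F x) (F y),
                \<xi> (F a) (F b) (F c) (F d) \<odot> I (ob (T' x) (T' y))] \<cdot> eta4 a b c d \<odot> (\<eta> x \<bullet> \<eta> y)"
    (is "cmps C [?K, ?X1, ?X2, ?R', ?Y] = cmps C [_, ?\<xi>', ?\<xi>0] \<cdot> ?Z")
proof -
  let ?sAC = "\<mu> a \<odot> \<mu> c \<cdot> T2c (T' a) (T' c)" and ?sBD = "\<mu> b \<odot> \<mu> d \<cdot> T2c (T' b) (T' d)"
  let ?I2 = "I (ob (oc (T' a) (T' c)) (oc (T' b) (T' d)))"
  have "?X1 \<cdot> ?X2 = (?sAC \<odot> (I (T' x) \<cdot> I (T' x))) \<bullet> (?sBD \<odot> (I (T' y) \<cdot> I (T' y)))"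
    by (rule interchange_comp; blast intro: typing objs)
  then have X: "?X1 \<cdot> ?X2 = (?sAC \<odot> I (T' x)) \<bullet> (?sBD \<odot> I (T' y))"
    using objs by (simp add: circ.comp_id_left[OF circ.id_hom] circ.T_obj)
  have XR: "(?sAC \<odot> I (T' x)) \<bullet> (?sBD \<odot> I (T' y)) \<cdot> ?R' = ?\<xi>' \<cdot> ?I2 \<odot> (\<eta> x \<bullet> \<eta> y)"
    using alg_homs_after_R[OF _ _ _ _ circ.alg_hom_free_lift_structure circ.alg_hom_free_lift_structure
        circ.alg_hom_free_id circ.alg_hom_free_id] objs
    by (simp add: circ.free_lift_structure_unit circ.comp_id_left[OF circ.eta_hom] bullet.tensor_id
        circ.tensor_obj circ.T_obj)
  have RY: "?I2 \<odot> (\<eta> x \<bullet> \<eta> y) \<cdot> ?Y = ?\<xi>0 \<cdot> ?Z"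
  proof -
    have "?I2 \<odot> (\<eta> x \<bullet> \<eta> y) \<cdot> ?Y = R a b c d \<odot> (\<eta> x \<bullet> \<eta> y)"
      by (subst circ.tensor_comp[symmetric], (blast intro: typing objs)+,
          subst circ.comp_id_left, (blast intro: typing objs)+,
          subst circ.comp_id_right; blast intro: typing objs)
    also have "\<dots> = ?\<xi>0 \<cdot> ?Z"
      by (subst circ.tensor_comp[symmetric], (blast intro: typing objs)+,
          subst circ.comp_id_left; blast intro: typing objs)
    finally show ?thesis .
  qed
  have "?X1 \<cdot> ?X2 \<cdot> ?R' \<cdot> ?Y = (?X1 \<cdot> ?X2) \<cdot> ?R' \<cdot> ?Y"
    by (rule circ.cat_assoc; blast intro: typing objs)
  also have "\<dots> = ((?sAC \<odot> I (T' x)) \<bullet> (?sBD \<odot> I (T' y)) \<cdot> ?R') \<cdot> ?Y"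
    unfolding X by (rule circ.cat_assoc; blast intro: typing objs)
  also have "\<dots> = ?\<xi>' \<cdot> ?\<xi>0 \<cdot> ?Z"
    unfolding XR RY[symmetric] by (rule circ.cat_assoc[symmetric]; blast intro: typing objs)
  finally have core: "?X1 \<cdot> ?X2 \<cdot> ?R' \<cdot> ?Y = ?\<xi>' \<cdot> ?\<xi>0 \<cdot> ?Z" .
  have "?K \<cdot> ?\<xi>' \<cdot> ?\<xi>0 \<cdot> ?Z = ?K \<cdot> (?\<xi>' \<cdot> ?\<xi>0) \<cdot> ?Z"
    by (subst circ.cat_assoc; blast intro: typing objs)
  also have "\<dots> = (?K \<cdot> ?\<xi>' \<cdot> ?\<xi>0) \<cdot> ?Z"
    by (rule circ.cat_assoc; blast intro: typing objs)
  finally show ?thesis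
    using core by simp
qed

lemma R_assoc_circ_rhs:
  assumes objs: "a \<in> Obj C" "b \<in> Obj C" "c \<in> Obj C" "d \<in> Obj C" "x \<in> Obj C" "y \<in> Obj C"
  shows "cmps C [(I (T' a) \<odot> (\<mu> c \<odot> \<mu> x)) \<bullet> (I (T' b) \<odot> (\<mu> d \<odot> \<mu> y)),
                (I (T' a) \<odot> T2c (T' c) (T' x)) \<bullet> (I (T' b) \<odot> T2c (T' d) (T' y)),
                R a b (oc (T' c) (T' x)) (oc (T' d) (T' y)),
                I (ob a b) \<odot> R c d x y,
                asc Mc (ob a b) (ob c d) (ob x y)]
       = cmps C [\<xi> (F a) (F b) (lc (F c) (F x)) (lc (F d) (F y)),
                I (ob (T' a) (T' b)) \<odot> \<xi> (F c) (F d) (F x) (F y),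
                asc Mc (ob (T' a) (T' b)) (ob (T' c) (T' d)) (ob (T' x) (T' y))]
           \<cdot> eta4 a b c d \<odot> (\<eta> x \<bullet> \<eta> y)"
    (is "cmps C [?Y1, ?Y2, ?R'', ?W, ?K] = cmps C [?\<xi>'', ?\<xi>c, ?K'] \<cdot> ?Z")
proof -
  let ?sCX = "\<mu> c \<odot> \<mu> x \<cdot> T2c (T' c) (T' x)" and ?sDY = "\<mu> d \<odot> \<mu> y \<cdot> T2c (T' d) (T' y)"
  let ?I3 = "I (ob (oc (T' c) (T' x)) (oc (T' d) (T' y)))"
  let ?N = "(\<eta> a \<bullet> \<eta> b) \<odot> eta4 c d x y"
  have "?Y1 \<cdot> ?Y2 = ((I (T' a) \<cdot> I (T' a)) \<odot> ?sCX) \<bullet> ((I (T' b) \<cdot> I (T' b)) \<odot> ?sDY)"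
    by (rule interchange_comp; blast intro: typing objs)
  then have Y: "?Y1 \<cdot> ?Y2 = (I (T' a) \<odot> ?sCX) \<bullet> (I (T' b) \<odot> ?sDY)"
    using objs by (simp add: circ.comp_id_left[OF circ.id_hom] circ.T_obj)
  have YR: "(I (T' a) \<odot> ?sCX) \<bullet> (I (T' b) \<odot> ?sDY) \<cdot> ?R'' = ?\<xi>'' \<cdot> (\<eta> a \<bullet> \<eta> b) \<odot> ?I3"
    using alg_homs_after_R[OF _ _ _ _ circ.alg_hom_free_id circ.alg_hom_free_id
        circ.alg_hom_free_lift_structure circ.alg_hom_free_lift_structure] objs
    by (simp add: circ.free_lift_structure_unit circ.comp_id_left[OF circ.eta_hom] bullet.tensor_id
        circ.tensor_obj circ.T_obj)
  have RW: "(\<eta> a \<bullet> \<eta> b) \<odot> ?I3 \<cdot> ?W = ?\<xi>c \<cdot> ?N"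
  proof -
    have "(\<eta> a \<bullet> \<eta> b) \<odot> ?I3 \<cdot> ?W = (\<eta> a \<bullet> \<eta> b) \<odot> R c d x y"
      by (subst circ.tensor_comp[symmetric], (blast intro: typing objs)+,
          subst circ.comp_id_left, (blast intro: typing objs)+, subst circ.comp_id_right; blast intro: typing objs)
    also have "\<dots> = ?\<xi>c \<cdot> ?N"
      by (subst circ.tensor_comp[symmetric], (blast intro: typing objs)+, subst circ.comp_id_left;
          blast intro: typing objs)
    finally show ?thesis .
  qed
  have KZ: "?N \<cdot> ?K = ?K' \<cdot> ?Z"
    by (rule circ.asc_natural[symmetric]; blast intro: typing objs)
  have "?Y1 \<cdot> ?Y2 \<cdot> ?R'' \<cdot> ?W \<cdot> ?K = ((?Y1 \<cdot> ?Y2) \<cdot> ?R'') \<cdot> ?W \<cdot> ?K"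
    by (subst circ.cat_assoc, (blast intro: typing objs)+, rule circ.cat_assoc; blast intro: typing objs)
  also have "\<dots> = ?\<xi>'' \<cdot> ((\<eta> a \<bullet> \<eta> b) \<odot> ?I3 \<cdot> ?W) \<cdot> ?K"
    unfolding Y YR
    by (subst circ.cat_assoc[symmetric], (blast intro: typing objs)+, subst circ.cat_assoc;
        blast intro: typing objs)
  also have "\<dots> = ?\<xi>'' \<cdot> ?\<xi>c \<cdot> ?K' \<cdot> ?Z"
    unfolding RW KZ[symmetric] by (subst circ.cat_assoc; blast intro: typing objs)
  also have "\<dots> = (?\<xi>'' \<cdot> ?\<xi>c \<cdot> ?K') \<cdot> ?Z"
    by (subst (2) circ.cat_assoc, (blast intro: typing objs)+, rule circ.cat_assoc;
        blast intro: typing objs)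
  finally show ?thesis
    by simp
qed

lemmas xi_assoc_circ =
  duoidal_conditions[THEN conjunct2, THEN conjunct2, THEN conjunct2, THEN conjunct1, rule_format,
    unfolded Let_def]

lemma R_assoc_circ:
  assumes objs: "a \<in> Obj C" "b \<in> Obj C" "c \<in> Obj C" "d \<in> Obj C" "x \<in> Obj C" "y \<in> Obj C"
  shows "cmps C [asc Mc (T' a) (T' c) (T' x) \<bullet> asc Mc (T' b) (T' d) (T' y),
                ((\<mu> a \<odot> \<mu> c) \<odot> I (T' x)) \<bullet> ((\<mu> b \<odot> \<mu> d) \<odot> I (T' y)),
                (T2c (T' a) (T' c) \<odot> I (T' x)) \<bullet> (T2c (T' b) (T' d) \<odot> I (T' y)),
                R (oc (T' a) (T' c)) (oc (T' b) (T' d)) x y,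
                R a b c d \<odot> I (ob x y)]
       = cmps C [(I (T' a) \<odot> (\<mu> c \<odot> \<mu> x)) \<bullet> (I (T' b) \<odot> (\<mu> d \<odot> \<mu> y)),
                (I (T' a) \<odot> T2c (T' c) (T' x)) \<bullet> (I (T' b) \<odot> T2c (T' d) (T' y)),
                R a b (oc (T' c) (T' x)) (oc (T' d) (T' y)),
                I (ob a b) \<odot> R c d x y,
                asc Mc (ob a b) (ob c d) (ob x y)]"
  using R_assoc_circ_lhs[OF objs] R_assoc_circ_rhs[OF objs]
    xi_assoc_circ[OF circ.alg_free_alg circ.alg_free_alg circ.alg_free_alg circ.alg_free_alg
      circ.alg_free_alg circ.alg_free_alg, OF objs(1,2,3,4,5,6)]
  by simp

lemma R_assoc_bullet_lhs:
  assumes objs: "x \<in> Obj C" "a \<in> Obj C" "c \<in> Obj C" "y \<in> Obj C" "b \<in> Obj C" "d \<in> Obj C"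
  shows "cmps C [asc Mb (oc (T' x) (T' y)) (oc (T' a) (T' b)) (oc (T' c) (T' d)),
                ((\<mu> x \<odot> \<mu> y) \<bullet> (\<mu> a \<odot> \<mu> b)) \<bullet> I (oc (T' c) (T' d)),
                R (T' x) (T' a) (T' y) (T' b) \<bullet> I (oc (T' c) (T' d)),
                (T2b x a \<odot> T2b y b) \<bullet> I (oc (T' c) (T' d)),
                R (ob x a) c (ob y b) d]
       = cmps C [asc Mb (oc (T' x) (T' y)) (oc (T' a) (T' b)) (oc (T' c) (T' d)),
                \<xi> (F x) (F a) (F y) (F b) \<bullet> I (oc (T' c) (T' d)),
                \<xi> (lb (F x) (F a)) (F c) (lb (F y) (F b)) (F d)]
           \<cdot> ((\<eta> x \<bullet> \<eta> a) \<bullet> \<eta> c) \<odot> ((\<eta> y \<bullet> \<eta> b) \<bullet> \<eta> d)"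
    (is "cmps C [?K, ?X1, ?X2, ?X3, ?R'] = cmps C [_, ?\<xi>1, ?\<xi>2] \<cdot> ?Z")
proof -
  have X: "?X1 \<cdot> ?X2 = ?\<xi>1"
    by (subst bullet.tensor_comp[symmetric], (blast intro: typing objs)+)
      (simp add: R_mu circ.comp_id_left[OF circ.id_hom] objs circ.tensor_obj circ.T_obj)
  have XR: "?X3 \<cdot> ?R' = ?\<xi>2 \<cdot> ?Z"
    using alg_homs_after_R[OF _ _ _ _ bullet.alg_hom_T2 circ.alg_hom_free_id bullet.alg_hom_T2
        circ.alg_hom_free_id] objs
    by (simp add: circ.tensor_id bullet.T2_eta circ.comp_id_left[OF circ.eta_hom] circ.T_obj
        bullet.tensor_obj)
  have "?K \<cdot> ?X1 \<cdot> ?X2 \<cdot> ?X3 \<cdot> ?R' = ?K \<cdot> (?X1 \<cdot> ?X2) \<cdot> ?X3 \<cdot> ?R'"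
    by (subst (2) circ.cat_assoc; blast intro: typing objs)
  also have "\<dots> = (?K \<cdot> ?\<xi>1 \<cdot> ?\<xi>2) \<cdot> ?Z"
    unfolding X XR
    by (subst (2) circ.cat_assoc, (blast intro: typing objs)+, rule circ.cat_assoc;
        blast intro: typing objs)
  finally show ?thesis
    by simp
qed

lemma R_assoc_bullet_rhs:
  assumes objs: "x \<in> Obj C" "a \<in> Obj C" "c \<in> Obj C" "y \<in> Obj C" "b \<in> Obj C" "d \<in> Obj C"
  shows "cmps C [I (oc (T' x) (T' y)) \<bullet> ((\<mu> a \<odot> \<mu> b) \<bullet> (\<mu> c \<odot> \<mu> d)),
                I (oc (T' x) (T' y)) \<bullet> R (T' a) (T' c) (T' b) (T' d),
                I (oc (T' x) (T' y)) \<bullet> (T2b a c \<odot> T2b b d),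
                R x (ob a c) y (ob b d),
                asc Mb x a c \<odot> asc Mb y b d]
       = cmps C [I (oc (T' x) (T' y)) \<bullet> \<xi> (F a) (F c) (F b) (F d),
                \<xi> (F x) (lb (F a) (F c)) (F y) (lb (F b) (F d)),
                asc Mb (T' x) (T' a) (T' c) \<odot> asc Mb (T' y) (T' b) (T' d)]
           \<cdot> ((\<eta> x \<bullet> \<eta> a) \<bullet> \<eta> c) \<odot> ((\<eta> y \<bullet> \<eta> b) \<bullet> \<eta> d)"
    (is "cmps C [?Y1, ?Y2, ?Y3, ?R'', ?W] = cmps C [?\<xi>a, ?\<xi>3, ?K] \<cdot> ?Z")
proof -
  let ?V = "(\<eta> x \<bullet> (\<eta> a \<bullet> \<eta> c)) \<odot> (\<eta> y \<bullet> (\<eta> b \<bullet> \<eta> d))"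
  have Y: "?Y1 \<cdot> ?Y2 = ?\<xi>a"
    by (subst bullet.tensor_comp[symmetric], (blast intro: typing objs)+)
      (simp add: R_mu circ.comp_id_left[OF circ.id_hom] objs circ.tensor_obj circ.T_obj)
  have YR: "?Y3 \<cdot> ?R'' = ?\<xi>3 \<cdot> ?V"
    using alg_homs_after_R[OF _ _ _ _ circ.alg_hom_free_id bullet.alg_hom_T2 circ.alg_hom_free_id
        bullet.alg_hom_T2] objs
    by (simp add: circ.tensor_id bullet.T2_eta circ.comp_id_left[OF circ.eta_hom] circ.T_obj
        bullet.tensor_obj)
  have VW: "?V \<cdot> ?W = ?K \<cdot> ?Z"
    by (subst (1 2) circ.tensor_comp[symmetric], (blast intro: typing objs)+,
        subst (1 2) bullet.asc_natural; blast intro: typing objs)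
  have "?Y1 \<cdot> ?Y2 \<cdot> ?Y3 \<cdot> ?R'' \<cdot> ?W = (?Y1 \<cdot> ?Y2) \<cdot> (?Y3 \<cdot> ?R'') \<cdot> ?W"
    by (subst (2) circ.cat_assoc, (blast intro: typing objs)+, rule circ.cat_assoc;
        blast intro: typing objs)
  also have "\<dots> = ?\<xi>a \<cdot> ?\<xi>3 \<cdot> ?K \<cdot> ?Z"
    unfolding Y YR VW[symmetric] by (subst circ.cat_assoc; blast intro: typing objs)
  also have "\<dots> = (?\<xi>a \<cdot> ?\<xi>3 \<cdot> ?K) \<cdot> ?Z"
    by (subst (2) circ.cat_assoc, (blast intro: typing objs)+, rule circ.cat_assoc;
        blast intro: typing objs)
  finally show ?thesis
    by simp
qed

lemmas xi_assoc_bullet =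
  duoidal_conditions[THEN conjunct2, THEN conjunct2, THEN conjunct2, THEN conjunct2, THEN conjunct1,
    rule_format, unfolded Let_def]

lemma R_assoc_bullet:
  assumes objs: "x \<in> Obj C" "a \<in> Obj C" "c \<in> Obj C" "y \<in> Obj C" "b \<in> Obj C" "d \<in> Obj C"
  shows "cmps C [asc Mb (oc (T' x) (T' y)) (oc (T' a) (T' b)) (oc (T' c) (T' d)),
                ((\<mu> x \<odot> \<mu> y) \<bullet> (\<mu> a \<odot> \<mu> b)) \<bullet> I (oc (T' c) (T' d)),
                R (T' x) (T' a) (T' y) (T' b) \<bullet> I (oc (T' c) (T' d)),
                (T2b x a \<odot> T2b y b) \<bullet> I (oc (T' c) (T' d)),
                R (ob x a) c (ob y b) d]
       = cmps C [I (oc (T' x) (T' y)) \<bullet> ((\<mu> a \<odot> \<mu> b) \<bullet> (\<mu> c \<odot> \<mu> d)),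
                I (oc (T' x) (T' y)) \<bullet> R (T' a) (T' c) (T' b) (T' d),
                I (oc (T' x) (T' y)) \<bullet> (T2b a c \<odot> T2b b d),
                R x (ob a c) y (ob b d),
                asc Mb x a c \<odot> asc Mb y b d]"
  using R_assoc_bullet_lhs[OF objs] R_assoc_bullet_rhs[OF objs]
    xi_assoc_bullet[OF circ.alg_free_alg circ.alg_free_alg circ.alg_free_alg circ.alg_free_alg
      circ.alg_free_alg circ.alg_free_alg, OF objs(1,4,2,5,3,6)]
  by simp

end

theorem mainTheorem3:
  fixes C :: "('o,'m) category" and Mc Mb :: "('o,'m) monoidal" and T :: "('o,'m) monad"
    and T2c T2b :: "'o \<Rightarrow> 'o \<Rightarrow> 'm" and T0c T0b :: 'm
    and \<xi> :: "'o \<times> 'm \<Rightarrow> 'o \<times> 'm \<Rightarrow> 'o \<times> 'm \<Rightarrow> 'o \<times> 'm \<Rightarrow> 'm"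
    and \<nu> \<omega> \<iota> :: 'm
  assumes "sep_opmonoidal_monad C Mc Mb T T2c T0c T2b T0b"
    and "duoidal_on_algebras C Mc Mb T T2c T0c T2b T0b \<xi> \<nu> \<omega> \<iota>"
  shows "r_matrix C Mc Mb T T2c T0c T2b T0b
           (\<lambda>a b c d. cmp C (\<xi> (free_alg T a) (free_alg T b) (free_alg T c) (free_alg T d))
                             (tm Mc (tm Mb (eta T a) (eta T b)) (tm Mb (eta T c) (eta T d))))
           \<nu> \<omega> \<iota>"
proof -
  interpret duoidal_lifting C Mc Mb T T2c T2b T0c T0b \<xi> \<nu> \<omega> \<iota>
    using assms by unfold_locales
  show ?thesis
    unfolding r_matrix_def Let_def
    by (simp del: cmps.simps add: R_hom R_natural unit_data R_unit xi_unit_conditions R_lift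
        R_assoc_circ R_assoc_bullet)
qed

end
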